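(* Let $r,s$ be integers with $s\ge 3$ and $s-r+1=0$, and let $G=(K_r\cup\overline{K_s})\vee\{v\}$, i.e. the graph obtained from the disjoint union of a complete graph on $r$ vertices and an edgeless graph on $s$ vertices by adding one new vertex $v$ adjacent to all $r+s$ of these vertices. Then $\mathrm{mur}(G)=3$.
   Context: For a finite simple undirected graph $G$ on vertices $v_1,\dots,v_n$, let $A_G$ be its $(0,1)$-adjacency matrix, $D_G=\mathrm{diag}(d_1,\dots,d_n)$ with $d_i$ the degree of $v_i$, $I$ the $n\times n$ identity matrix and $J$ the $n\times n$ all-ones matrix. A universal adjacency matrix of $G$ is any matrix $\alpha A_G+\beta I+\gamma J+\delta D_G$ with real scalars $\alpha,\beta,\gamma,\delta$ and $\alpha\neq 0$. The minimum universal rank $\mathrm{mur}(G)$ is the minimum rank over all universal adjacency matrices of $G$. *)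

theory Defs
  imports "Jordan_Normal_Form.DL_Rank"
begin

text \<open>A finite simple graph on vertex set {0..<n} is given by an adjacency
  predicate; only its values on {0..<n} matter.\<close>

definition simple_graph :: "nat \<Rightarrow> (nat \<Rightarrow> nat \<Rightarrow> bool) \<Rightarrow> bool" where
  "simple_graph n E \<longleftrightarrow> (\<forall>i<n. \<forall>j<n. E i j = E j i) \<and> (\<forall>i<n. \<not> E i i)"

definition adj_mat :: "nat \<Rightarrow> (nat \<Rightarrow> nat \<Rightarrow> bool) \<Rightarrow> real mat" where
  "adj_mat n E = mat n n (\<lambda>(i,j). if E i j then 1 else 0)"

definition degree :: "nat \<Rightarrow> (nat \<Rightarrow> nat \<Rightarrow> bool) \<Rightarrow> nat \<Rightarrow> nat" where
  "degree n E i = card {j. j < n \<and> E i j}"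

definition deg_mat :: "nat \<Rightarrow> (nat \<Rightarrow> nat \<Rightarrow> bool) \<Rightarrow> real mat" where
  "deg_mat n E = mat n n (\<lambda>(i,j). if i = j then real (degree n E i) else 0)"

definition ones_mat :: "nat \<Rightarrow> real mat" where
  "ones_mat n = mat n n (\<lambda>_. 1)"

definition univ_adj_mat ::
  "nat \<Rightarrow> (nat \<Rightarrow> nat \<Rightarrow> bool) \<Rightarrow> real \<Rightarrow> real \<Rightarrow> real \<Rightarrow> real \<Rightarrow> real mat" where
  "univ_adj_mat n E \<alpha> \<beta> \<gamma> \<delta> =
     \<alpha> \<cdot>\<^sub>m adj_mat n E + \<beta> \<cdot>\<^sub>m 1\<^sub>m n + \<gamma> \<cdot>\<^sub>m ones_mat n + \<delta> \<cdot>\<^sub>m deg_mat n E"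

definition mat_rank :: "real mat \<Rightarrow> nat" where
  "mat_rank A = vec_space.rank (dim_row A) A"

definition mur :: "nat \<Rightarrow> (nat \<Rightarrow> nat \<Rightarrow> bool) \<Rightarrow> nat" where
  "mur n E = (LEAST k. \<exists>\<alpha> \<beta> \<gamma> \<delta>. \<alpha> \<noteq> 0 \<and> mat_rank (univ_adj_mat n E \<alpha> \<beta> \<gamma> \<delta>) = k)"

text \<open>The graph (K_r \<union> complement of K_s) joined with a vertex v, on vertices {0..<r+s+1}:
  0..r-1 form the clique K_r, r..r+s-1 the independent set, and r+s is v.\<close>
definition join_graph :: "nat \<Rightarrow> nat \<Rightarrow> nat \<Rightarrow> nat \<Rightarrow> bool" where
  "join_graph r s i j \<longleftrightarrow> i \<noteq> j \<and> ((i < r \<and> j < r) \<or> i = r + s \<or> j = r + s)"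

lemma simple_graph_join_graph: "simple_graph (r + s + 1) (join_graph r s)"
  unfolding simple_graph_def join_graph_def by auto

end

theory Submission
  imports Defs "Jordan_Normal_Form.DL_Rank_Submatrix"
begin

text \<open>Write \<open>s = m\<close>, so \<open>r = m + 1\<close>. A universal adjacency matrix of \<open>G\<close> is constant on the
  blocks formed by the clique, the independent set and \<open>v\<close>: its off-diagonal entries are \<open>a = \<alpha> + \<gamma>\<close>
  between adjacent and \<open>c = \<gamma>\<close> between non-adjacent vertices, and its diagonal entries are \<open>p\<close> on
  the clique, \<open>q\<close> on the independent set and, because \<open>deg v = 2m + 1 = 2 (m + 1) - 1\<close>, \<open>2p - q\<close>
  at \<open>v\<close>. Since \<open>a \<noteq> c\<close>, a case distinction on \<open>p = a\<close>, \<open>q = c\<close> and \<open>a = 0\<close> always exhibits a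
  nonzero \<open>3 \<times> 3\<close> minor, so the rank is at least 3. For \<open>\<alpha> = 1, \<beta> = -1/m, \<gamma> = 0, \<delta> = 1/m\<close> we get
  \<open>a = p = 1\<close>, \<open>c = q = 0\<close>, and the matrix is a sum of three rank-one matrices.\<close>

lemma (in vec_space) rank_le_of_sum_of_products:
  assumes "A \<in> carrier_mat n nc"
    and "\<And>i j. i < n \<Longrightarrow> j < nc \<Longrightarrow> A $$ (i,j) = (\<Sum>k<K. f k i * g k j)"
  shows "rank A \<le> K"
  using assms
proof (induction K arbitrary: A)
  case 0
  then have "A = 0\<^sub>m n nc" by (intro eq_matI) auto
  then show ?case by (simp add: rank_0I)
next
  case (Suc K)
  define B where "B = mat n nc (\<lambda>(i,j). \<Sum>k<K. f k i * g k j)"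
  define C where "C = mat n nc (\<lambda>(i,j). f K i * g K j)"
  have B: "B \<in> carrier_mat n nc" and C: "C \<in> carrier_mat n nc" by (auto simp: B_def C_def)
  have "A = B + C" using Suc.prems by (intro eq_matI) (auto simp: B_def C_def)
  moreover have "rank B \<le> K" by (rule Suc.IH[OF B]) (simp add: B_def)
  moreover have "rank C \<le> 1" by (rule rank_le_1_product_entries[OF C]) (auto simp: C_def)
  ultimately show ?case using rank_subadditive[OF B C] by simp
qed

lemma det_mat_2:
  fixes A :: "'a::comm_ring_1 mat"
  assumes "A \<in> carrier_mat 2 2"
  shows "det A = A$$(0,0) * A$$(1,1) - A$$(0,1) * A$$(1,0)"
proof -
  have "det (mat_delete A 0 j) = A$$(1, if 0 < j then 0 else 1)" for j
    using det_single[of "mat_delete A 0 j"] assms by (simp add: mat_delete_def)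
  moreover have "{..<2::nat} = {0,1}" by auto
  ultimately show ?thesis using laplace_expansion_row[OF assms, of 0] by (simp add: cofactor_def)
qed

lemma det_mat_3:
  fixes A :: "'a::comm_ring_1 mat"
  assumes "A \<in> carrier_mat 3 3"
  shows "det A = A$$(0,0)*A$$(1,1)*A$$(2,2) - A$$(0,0)*A$$(1,2)*A$$(2,1)
    - A$$(0,1)*A$$(1,0)*A$$(2,2) + A$$(0,1)*A$$(1,2)*A$$(2,0)
    + A$$(0,2)*A$$(1,0)*A$$(2,1) - A$$(0,2)*A$$(1,1)*A$$(2,0)"
proof -
  have minors: "det (mat_delete A 0 j) = A$$(1, if 0 < j then 0 else 1) * A$$(2, if 1 < j then 1 else 2)
      - A$$(1, if 1 < j then 1 else 2) * A$$(2, if 0 < j then 0 else 1)" for j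
    using det_mat_2[of "mat_delete A 0 j"] assms by (simp add: mat_delete_def numeral_2_eq_2)
  have "{..<3::nat} = {0,1,2}" by auto
  then show ?thesis
    using laplace_expansion_row[OF assms, of 0] by (simp add: cofactor_def minors algebra_simps)
qed

definition minor3 :: "'a::comm_ring_1 mat \<Rightarrow> nat \<Rightarrow> nat \<Rightarrow> nat \<Rightarrow> nat \<Rightarrow> nat \<Rightarrow> nat \<Rightarrow> 'a" where
  "minor3 A i0 i1 i2 j0 j1 j2 =
     A$$(i0,j0)*A$$(i1,j1)*A$$(i2,j2) - A$$(i0,j0)*A$$(i1,j2)*A$$(i2,j1)
   - A$$(i0,j1)*A$$(i1,j0)*A$$(i2,j2) + A$$(i0,j1)*A$$(i1,j2)*A$$(i2,j0)
   + A$$(i0,j2)*A$$(i1,j0)*A$$(i2,j1) - A$$(i0,j2)*A$$(i1,j1)*A$$(i2,j0)"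

lemma pick_three:
  assumes "a < b" "b < (c::nat)"
  shows "pick {a,b,c} 0 = a" "pick {a,b,c} 1 = b" "pick {a,b,c} 2 = c"
proof -
  show 0: "pick {a,b,c} 0 = a" using assms by (auto intro!: Least_equality)
  show 1: "pick {a,b,c} 1 = b" using assms 0 by (auto intro!: Least_equality)
  show "pick {a,b,c} 2 = c" using assms 1 by (auto simp: numeral_2_eq_2 intro!: Least_equality)
qed

lemma det_submatrix_3:
  fixes A :: "'a::comm_ring_1 mat"
  assumes "i0 < i1" "i1 < i2" "i2 < dim_row A" and "j0 < j1" "j1 < j2" "j2 < dim_col A"
  shows "det (submatrix A {i0,i1,i2} {j0,j1,j2}) = minor3 A i0 i1 i2 j0 j1 j2"
proof -
  let ?S = "submatrix A {i0,i1,i2} {j0,j1,j2}"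
  have rows: "{i. i < dim_row A \<and> i \<in> {i0,i1,i2}} = {i0,i1,i2}"
    and cols: "{j. j < dim_col A \<and> j \<in> {j0,j1,j2}} = {j0,j1,j2}" using assms by auto
  have card: "card {i0,i1,i2} = 3" "card {j0,j1,j2} = 3" using assms by auto
  have S: "?S \<in> carrier_mat 3 3"
    by (rule carrier_matI) (simp_all only: dim_submatrix rows cols card)
  have "?S $$ (x,y) = A $$ (pick {i0,i1,i2} x, pick {j0,j1,j2} y)" if "x < 3" "y < 3" for x y
    unfolding submatrix_def rows cols card using that by (simp only: index_mat prod.case)
  then show ?thesis
    using pick_three[OF assms(1,2)] pick_three[OF assms(4,5)]
    by (simp add: det_mat_3[OF S] minor3_def)
qed

lemma (in vec_space) minor3_nonzero_imp_rank_ge_3: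
  assumes "A \<in> carrier_mat n nc"
    and "i0 < i1" "i1 < i2" "i2 < n" and "j0 < j1" "j1 < j2" "j2 < nc"
    and "minor3 A i0 i1 i2 j0 j1 j2 \<noteq> 0"
  shows "3 \<le> rank A"
proof -
  have "det (submatrix A {i0,i1,i2} {j0,j1,j2}) \<noteq> 0"
    using assms by (subst det_submatrix_3) auto
  moreover have "{j. j < nc \<and> j \<in> {j0,j1,j2}} = {j0,j1,j2}" using assms(5-7) by auto
  ultimately show ?thesis
    using rank_gt_minor[OF assms(1)] assms(5,6) by fastforce
qed

lemma carrier_univ_adj_mat: "univ_adj_mat n E \<alpha> \<beta> \<gamma> \<delta> \<in> carrier_mat n n"
  by (simp add: univ_adj_mat_def adj_mat_def ones_mat_def deg_mat_def)

lemma mat_rank_univ_adj_mat: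
  "mat_rank (univ_adj_mat n E \<alpha> \<beta> \<gamma> \<delta>) = vec_space.rank n (univ_adj_mat n E \<alpha> \<beta> \<gamma> \<delta>)"
  using carrier_matD(1)[OF carrier_univ_adj_mat] by (simp add: mat_rank_def)

lemma mur_eqI:
  assumes "\<And>\<alpha> \<beta> \<gamma> \<delta>. \<alpha> \<noteq> 0 \<Longrightarrow> k \<le> mat_rank (univ_adj_mat n E \<alpha> \<beta> \<gamma> \<delta>)"
    and "\<alpha> \<noteq> 0" and "mat_rank (univ_adj_mat n E \<alpha> \<beta> \<gamma> \<delta>) = k"
  shows "mur n E = k"
  unfolding mur_def by (rule Least_equality) (use assms in blast)+

lemma degree_join_graph:
  assumes "i < 2*m+2"
  shows "degree (2*m+2) (join_graph (Suc m) m) i =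
     (if i \<le> m then Suc m else if i = 2*m+1 then 2*m+1 else 1)"
proof -
  consider "i \<le> m" | "i = 2*m+1" | "m < i" "i < 2*m+1" using assms by linarith
  then show ?thesis
  proof cases
    case 1
    then have "{j. j < 2*m+2 \<and> join_graph (Suc m) m i j} = insert (2*m+1) ({..<Suc m} - {i})"
      unfolding join_graph_def by auto
    with 1 show ?thesis by (simp add: degree_def)
  next
    case 2
    then have "{j. j < 2*m+2 \<and> join_graph (Suc m) m i j} = {..<2*m+1}"
      unfolding join_graph_def by auto
    with 2 show ?thesis by (simp add: degree_def)
  next
    case 3
    then have "{j. j < 2*m+2 \<and> join_graph (Suc m) m i j} = {2*m+1}"
      unfolding join_graph_def by auto
    with 3 show ?thesis by (simp add: degree_def)
  qed
qed

lemma univ_adj_mat_join_graph_entry: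
  assumes "i < 2*m+2" "j < 2*m+2"
  shows "univ_adj_mat (2*m+2) (join_graph (Suc m) m) \<alpha> \<beta> \<gamma> \<delta> $$ (i,j) =
   (if i = j then
      if i \<le> m then \<beta> + \<gamma> + \<delta> * (m+1)
      else if i = 2*m+1 then \<beta> + \<gamma> + \<delta> * (2*m+1) else \<beta> + \<gamma> + \<delta>
    else if (i \<le> m \<and> j \<le> m) \<or> i = 2*m+1 \<or> j = 2*m+1 then \<alpha> + \<gamma> else \<gamma>)"
  using assms degree_join_graph[OF assms(1)]
  by (auto simp: univ_adj_mat_def adj_mat_def ones_mat_def deg_mat_def join_graph_def)

lemma rank_univ_adj_mat_join_graph_ge_3:
  assumes m: "m \<ge> 3" and "\<alpha> \<noteq> 0"
  shows "3 \<le> mat_rank (univ_adj_mat (2*m+2) (join_graph (Suc m) m) \<alpha> \<beta> \<gamma> \<delta>)"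
proof -
  define A where "A = univ_adj_mat (2*m+2) (join_graph (Suc m) m) \<alpha> \<beta> \<gamma> \<delta>"
  let ?v = "2*m+1"
  define a where "a = \<alpha> + \<gamma>"
  define c where "c = \<gamma>"
  define p where "p = \<beta> + \<gamma> + \<delta> * (m+1)"
  define q where "q = \<beta> + \<gamma> + \<delta>"
  have ac: "a \<noteq> c" using assms(2) by (simp add: a_def c_def)
  have entry: "A $$ (i,j) = (if i = j then
      if i \<le> m then p else if i = ?v then 2*p - q else q
    else if (i \<le> m \<and> j \<le> m) \<or> i = ?v \<or> j = ?v then a else c)"
    if "i < 2*m+2" "j < 2*m+2" for i j
    unfolding A_def univ_adj_mat_join_graph_entry[OF that]
    by (auto simp: a_def c_def p_def q_def algebra_simps)
  have rank_ge_3: "3 \<le> mat_rank A"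
    if "i0 < i1" "i1 < i2" "i2 < 2*m+2" "j0 < j1" "j1 < j2" "j2 < 2*m+2"
      and "minor3 A i0 i1 i2 j0 j1 j2 \<noteq> 0" for i0 i1 i2 j0 j1 j2
    using vec_space.minor3_nonzero_imp_rank_ge_3[OF carrier_univ_adj_mat that[unfolded A_def]]
    by (simp add: A_def mat_rank_univ_adj_mat)
  have M1: "minor3 A 0 1 (m+1) 0 2 ?v = (p-a) * a * (a-c)"
    and M2: "minor3 A 0 1 (m+1) 0 2 (m+1) = (p-a) * (a*q - c^2)"
    and M4: "minor3 A 0 (m+1) (m+2) 0 (m+1) ?v = a * (q-c) * (p-c)"
    and M5: "minor3 A 0 (m+1) (m+2) 0 (m+1) (m+3) = c * (q-c) * (p-c)"
    using m by (simp_all add: minor3_def entry algebra_simps power2_eq_square)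
  have M3: "minor3 A 0 (m+1) ?v 0 (m+1) ?v = (c-a)^3" if "p = a" "q = c"
    using m that by (simp add: minor3_def entry algebra_simps power3_eq_cube)
  have v: "m+1 < m+2" "m+2 < ?v" "m+3 < ?v" "?v < 2*m+2" using m by simp_all
  consider "p \<noteq> a" "a \<noteq> 0" | "p \<noteq> a" "a = 0" | "p = a" "q = c"
    | "p = a" "q \<noteq> c" "a \<noteq> 0" | "p = a" "q \<noteq> c" "a = 0"
    by blast
  then have "3 \<le> mat_rank A"
  proof cases
    case 1
    then show ?thesis using v ac M1 by (intro rank_ge_3[of 0 1 "m+1" 0 2 ?v]) simp_all
  next
    case 2
    then show ?thesis using v ac M2 by (intro rank_ge_3[of 0 1 "m+1" 0 2 "m+1"]) simp_all
  next
    case 3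
    then show ?thesis using v ac M3 by (intro rank_ge_3[of 0 "m+1" ?v 0 "m+1" ?v]) simp_all
  next
    case 4
    then show ?thesis using v ac M4 by (intro rank_ge_3[of 0 "m+1" "m+2" 0 "m+1" ?v]) simp_all
  next
    case 5
    then show ?thesis using v ac M5 by (intro rank_ge_3[of 0 "m+1" "m+2" 0 "m+1" "m+3"]) simp_all
  qed
  then show ?thesis by (simp add: A_def)
qed

lemma rank_univ_adj_mat_join_graph_le_3:
  assumes "m > 0"
  shows "mat_rank (univ_adj_mat (2*m+2) (join_graph (Suc m) m) 1 (-1/m) 0 (1/m)) \<le> 3"
proof -
  let ?v = "2*m+1"
  let ?ind = "\<lambda>P. if P then 1 else 0 :: real"
  \<comment> \<open>ones on (clique + \<open>v\<close>) \<times> clique, ones in column \<open>v\<close>, ones in row \<open>v\<close> off the clique\<close>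
  define f where "f k i = [?ind (i \<le> m \<or> i = ?v), 1, ?ind (i = ?v)] ! k" for k i
  define g where "g k j = [?ind (j \<le> m), ?ind (j = ?v), ?ind (m < j)] ! k" for k j
  have "univ_adj_mat (2*m+2) (join_graph (Suc m) m) 1 (-1/m) 0 (1/m) $$ (i,j)
      = (\<Sum>k<3. f k i * g k j)" if "i < 2*m+2" "j < 2*m+2" for i j
    using assms that
    by (subst univ_adj_mat_join_graph_entry) (auto simp: f_def g_def numeral_3_eq_3 field_simps)
  then show ?thesis
    unfolding mat_rank_univ_adj_mat
    by (intro vec_space.rank_le_of_sum_of_products[OF carrier_univ_adj_mat])
qed

lemma mur_join_graph:
  assumes "m \<ge> 3"
  shows "mur (2*m+2) (join_graph (Suc m) m) = 3"
proof (rule mur_eqI)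
  show "3 \<le> mat_rank (univ_adj_mat (2*m+2) (join_graph (Suc m) m) \<alpha> \<beta> \<gamma> \<delta>)"
    if "\<alpha> \<noteq> 0" for \<alpha> \<beta> \<gamma> \<delta>
    using rank_univ_adj_mat_join_graph_ge_3[OF assms that] .
  show "mat_rank (univ_adj_mat (2*m+2) (join_graph (Suc m) m) 1 (-1/m) 0 (1/m)) = 3"
    using rank_univ_adj_mat_join_graph_le_3[of m] rank_univ_adj_mat_join_graph_ge_3[OF assms, of 1] assms
    by (intro antisym) simp_all
qed simp

theorem theorem22:
  fixes r s :: int
  assumes "s \<ge> 3" and "s - r + 1 = 0"
  shows "mur (nat (r + s + 1)) (join_graph (nat r) (nat s)) = 3"
proof -
  have "nat (r + s + 1) = 2 * nat s + 2" and "nat r = Suc (nat s)" using assms by linarith+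
  with mur_join_graph[of "nat s"] show ?thesis using assms by simp
qed

end
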